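(* Let $A$ be a general metric space and $\mathrm{WFil}^*(A)$ the preorder of weakly flat filters on $A$ under the relation $\to$. Then: (a) every nonempty family of objects of $\mathrm{WFil}^*(A)$ has a least upper bound (colimit) in $\mathrm{WFil}^*(A)$; (b) the filters of forward Cauchy sequences are dense: every weakly flat filter $\mathcal F$ is a least upper bound in $\mathrm{WFil}^*(A)$ of the family of (filters of) forward Cauchy sequences $(x_n)$ with $(x_n)\to\mathcal F$; (c) the flat filters are exactly (up to isomorphism in $\mathrm{WFil}^*(A)$) the least upper bounds in $\mathrm{WFil}^*(A)$ of nonempty families $\mathcal S$ of (filters of) forward Cauchy sequences that are directed, i.e. for all $s,t\in\mathcal S$ there is $u\in\mathcal S$ with $s\to u$ and $t\to u$ (equivalently, colimits of functors with nonempty filtered domain taking values forward Cauchy sequences).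
   Context: A general metric space $A$ is a set with $A(-,-):A\times A\to[0,\infty]$, $A(x,x)=0$, $A(x,z)\le A(x,y)+A(y,z)$ (no symmetry). A filter on $A$ is a nonempty set of nonempty subsets closed under finite intersections and supersets. $\mathcal F$ is weakly flat iff for every $\epsilon>0$ there is $f\in\mathcal F$ such that for all $x\in f$ and all $g\in\mathcal F$ there is $y\in g$ with $A(x,y)\le\epsilon$; $\mathcal F$ is flat iff for every $\epsilon>0$ there is $f\in\mathcal F$ such that for every finite family $x_1,\dots,x_n\in f$ and every $g\in\mathcal F$ there is $y\in g$ with $A(x_i,y)\le\epsilon$ for all $i$. For weakly flat filters, $\mathcal F_1\to\mathcal F_2$ iff for every $\epsilon>0$ there is $f\in\mathcal F_1$ such that for every $x\in f$ and every $g\in\mathcal F_2$ there is $y\in g$ with $A(x,y)\le\epsilon$; this is a preorder. The filter of a sequence $(x_n)$ is generated by the tails $\{x_p:p\ge n\}$; $(x_n)$ is forward Cauchy iff for every $\epsilon>0$ there is $N$ with $A(x_n,x_m)\le\epsilon$ whenever $m\ge n\ge N$ (such filters are flat). *)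

theory Defs
  imports Complex_Main "HOL-Library.Extended_Nonnegative_Real"
begin

definition gms :: "('a \<Rightarrow> 'a \<Rightarrow> ennreal) \<Rightarrow> bool" where
  "gms d \<longleftrightarrow> (\<forall>x. d x x = 0) \<and> (\<forall>x y z. d x z \<le> d x y + d y z)"

definition is_filt :: "'a set set \<Rightarrow> bool" where
  "is_filt F \<longleftrightarrow> F \<noteq> {} \<and> (\<forall>f\<in>F. f \<noteq> {})
     \<and> (\<forall>f\<in>F. \<forall>g\<in>F. f \<inter> g \<in> F) \<and> (\<forall>f\<in>F. \<forall>g. f \<subseteq> g \<longrightarrow> g \<in> F)"

definition weakly_flat :: "('a \<Rightarrow> 'a \<Rightarrow> ennreal) \<Rightarrow> 'a set set \<Rightarrow> bool" where
  "weakly_flat d F \<longleftrightarrow> (\<forall>\<epsilon>::real. \<epsilon> > 0 \<longrightarrow>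
     (\<exists>f\<in>F. \<forall>x\<in>f. \<forall>g\<in>F. \<exists>y\<in>g. d x y \<le> ennreal \<epsilon>))"

definition flat :: "('a \<Rightarrow> 'a \<Rightarrow> ennreal) \<Rightarrow> 'a set set \<Rightarrow> bool" where
  "flat d F \<longleftrightarrow> (\<forall>\<epsilon>::real. \<epsilon> > 0 \<longrightarrow>
     (\<exists>f\<in>F. \<forall>X. finite X \<and> X \<subseteq> f \<longrightarrow> (\<forall>g\<in>F. \<exists>y\<in>g. \<forall>x\<in>X. d x y \<le> ennreal \<epsilon>)))"

definition conv :: "('a \<Rightarrow> 'a \<Rightarrow> ennreal) \<Rightarrow> 'a set set \<Rightarrow> 'a set set \<Rightarrow> bool" where
  "conv d F1 F2 \<longleftrightarrow> (\<forall>\<epsilon>::real. \<epsilon> > 0 \<longrightarrow>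
     (\<exists>f\<in>F1. \<forall>x\<in>f. \<forall>g\<in>F2. \<exists>y\<in>g. d x y \<le> ennreal \<epsilon>))"

definition wfil :: "('a \<Rightarrow> 'a \<Rightarrow> ennreal) \<Rightarrow> 'a set set \<Rightarrow> bool" where
  "wfil d F \<longleftrightarrow> is_filt F \<and> weakly_flat d F"

definition is_lub :: "('a \<Rightarrow> 'a \<Rightarrow> ennreal) \<Rightarrow> 'a set set set \<Rightarrow> 'a set set \<Rightarrow> bool" where
  "is_lub d S F \<longleftrightarrow> wfil d F \<and> (\<forall>G\<in>S. conv d G F)
     \<and> (\<forall>H. wfil d H \<and> (\<forall>G\<in>S. conv d G H) \<longrightarrow> conv d F H)"

definition seq_filter :: "(nat \<Rightarrow> 'a) \<Rightarrow> 'a set set" where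
  "seq_filter x = {s. \<exists>n. {x p |p. p \<ge> n} \<subseteq> s}"

definition fwd_cauchy :: "('a \<Rightarrow> 'a \<Rightarrow> ennreal) \<Rightarrow> (nat \<Rightarrow> 'a) \<Rightarrow> bool" where
  "fwd_cauchy d x \<longleftrightarrow> (\<forall>\<epsilon>::real. \<epsilon> > 0 \<longrightarrow>
     (\<exists>N. \<forall>n m. N \<le> n \<and> n \<le> m \<longrightarrow> d (x n) (x m) \<le> ennreal \<epsilon>))"

definition directed_fam :: "('a \<Rightarrow> 'a \<Rightarrow> ennreal) \<Rightarrow> 'a set set set \<Rightarrow> bool" where
  "directed_fam d S \<longleftrightarrow> (\<forall>s\<in>S. \<forall>t\<in>S. \<exists>u\<in>S. conv d s u \<and> conv d t u)"

end

theory Submission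
  imports Defs
begin

(* Everything is governed by the sets near d F e of points that are e-close to every member of F:
   F1 \<rightarrow> F2 says that near d F2 e contains a member of F1 for every e > 0, and F is weakly flat
   iff F \<rightarrow> F. The least upper bound of a nonempty family of weakly flat filters is its intersection.
   Every point of near d F e starts a forward Cauchy sequence converging to F (choose the n-th term
   in near d F (e/2^n)), so any upper bound of these sequences lies above F.
   If F is flat, finitely many points of a flatness witness have a common (1/2^n)-close point in
   any member of F, so two Cauchy approximants of F can be merged into a third one above both.
   Conversely, in a directed family of Cauchy filters finitely many settled tail points of its
   sequences lie close to a tail of one common upper bound in the family, which makes the
   intersection of the family flat. *)

definition near :: "('a \<Rightarrow> 'a \<Rightarrow> ennreal) \<Rightarrow> 'a set set \<Rightarrow> real \<Rightarrow> 'a set" where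
  "near d F e = {x. \<forall>g\<in>F. \<exists>y\<in>g. d x y \<le> ennreal e}"

lemma conv_iff_near: "conv d G H \<longleftrightarrow> (\<forall>e>0. \<exists>g\<in>G. g \<subseteq> near d H e)"
  unfolding conv_def near_def subset_iff mem_Collect_eq Ball_def by (rule refl)

lemma weakly_flat_iff_conv_self: "weakly_flat d F \<longleftrightarrow> conv d F F"
  unfolding weakly_flat_def conv_def by (rule refl)

lemma near_mono: "e \<le> e' \<Longrightarrow> near d F e \<subseteq> near d F e'"
  unfolding near_def by (fastforce dest: ennreal_leI intro: order_trans)

lemma near_antimono: "F \<subseteq> F' \<Longrightarrow> near d F' e \<subseteq> near d F e"
  unfolding near_def by auto

lemma gms_triangle:
  assumes "gms d" "d a b \<le> ennreal e1" "d b c \<le> ennreal e2" "0 \<le> e1" "0 \<le> e2" "e1 + e2 \<le> e"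
  shows "d a c \<le> ennreal e"
proof -
  have "d a c \<le> d a b + d b c" using assms(1) unfolding gms_def by blast
  also have "\<dots> \<le> ennreal e1 + ennreal e2" using assms(2,3) by (rule add_mono)
  also have "\<dots> = ennreal (e1 + e2)" using assms(4,5) by (simp add: ennreal_plus)
  also have "\<dots> \<le> ennreal e" using assms(6) by (rule ennreal_leI)
  finally show ?thesis .
qed

lemma near_triangle:
  assumes "gms d" "d a b \<le> ennreal e1" "b \<in> near d H e2" "0 \<le> e1" "0 \<le> e2" "e1 + e2 \<le> e"
  shows "a \<in> near d H e"
  using assms gms_triangle[OF assms(1,2) _ assms(4,5,6)] unfolding near_def by blast

lemma is_filt_upward: "is_filt F \<Longrightarrow> f \<in> F \<Longrightarrow> f \<subseteq> g \<Longrightarrow> g \<in> F"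
  unfolding is_filt_def by blast

lemma is_filt_nonempty: "is_filt F \<Longrightarrow> f \<in> F \<Longrightarrow> f \<noteq> {}"
  unfolding is_filt_def by simp

lemma is_filt_UNIV: "is_filt F \<Longrightarrow> UNIV \<in> F"
  unfolding is_filt_def by (meson all_not_in_conv subset_UNIV)

lemma near_mem_if_conv: "is_filt G \<Longrightarrow> conv d G H \<Longrightarrow> e > 0 \<Longrightarrow> near d H e \<in> G"
  unfolding conv_iff_near using is_filt_upward by blast

lemma near_mem_if_wfil: "wfil d F \<Longrightarrow> e > 0 \<Longrightarrow> near d F e \<in> F"
  unfolding wfil_def weakly_flat_iff_conv_self using near_mem_if_conv by blast

lemma conv_trans:
  assumes gms: "gms d" and "conv d G H" "conv d H K"
  shows "conv d G K"
  unfolding conv_iff_near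
proof (intro allI impI)
  fix e :: real assume e: "e > 0"
  obtain g where g: "g \<in> G" "g \<subseteq> near d H (e/2)"
    using \<open>conv d G H\<close> e unfolding conv_iff_near by (meson half_gt_zero)
  obtain h where h: "h \<in> H" "h \<subseteq> near d K (e/2)"
    using \<open>conv d H K\<close> e unfolding conv_iff_near by (meson half_gt_zero)
  have "x \<in> near d K e" if "x \<in> g" for x
  proof -
    obtain y where "y \<in> h" "d x y \<le> ennreal (e/2)" using g h \<open>x \<in> g\<close> unfolding near_def by blast
    then show ?thesis using near_triangle[OF gms, of x y "e/2" K "e/2" e] h e by auto
  qed
  then show "\<exists>g\<in>G. g \<subseteq> near d K e" using g(1) by blast
qed

lemma is_filt_Inter:
  assumes "S \<noteq> {}" "\<forall>G\<in>S. is_filt G"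
  shows "is_filt (\<Inter>S)"
proof -
  have "UNIV \<in> \<Inter>S" using assms(2) is_filt_UNIV by blast
  moreover have "{} \<notin> \<Inter>S" using assms unfolding is_filt_def by (meson InterD ex_in_conv)
  moreover have "f \<inter> g \<in> \<Inter>S" if "f \<in> \<Inter>S" "g \<in> \<Inter>S" for f g
    using assms(2) that unfolding is_filt_def by (simp add: Inter_iff)
  moreover have "g \<in> \<Inter>S" if "f \<in> \<Inter>S" "f \<subseteq> g" for f g
    using assms(2) that is_filt_upward by (meson InterD InterI)
  ultimately show ?thesis unfolding is_filt_def by blast
qed

lemma is_lub_unique: "is_lub d S F \<Longrightarrow> is_lub d S G \<Longrightarrow> conv d F G \<and> conv d G F"
  unfolding is_lub_def by blast

lemma is_lub_Inter:
  assumes S: "S \<noteq> {}" "\<forall>G\<in>S. wfil d G"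
  shows "is_lub d S (\<Inter>S)"
proof -
  have filt: "\<forall>G\<in>S. is_filt G" using S(2) unfolding wfil_def by blast
  have upper: "conv d G (\<Inter>S)" if G: "G \<in> S" for G
    unfolding conv_iff_near
  proof (intro allI impI)
    fix e :: real assume "e > 0"
    then have "near d G e \<in> G" using near_mem_if_wfil S(2) G by blast
    moreover have "near d G e \<subseteq> near d (\<Inter>S) e" using G by (intro near_antimono) blast
    ultimately show "\<exists>g\<in>G. g \<subseteq> near d (\<Inter>S) e" by blast
  qed
  have least: "conv d (\<Inter>S) H" if H: "\<forall>G\<in>S. conv d G H" for H
    unfolding conv_iff_near
  proof (intro allI impI)
    fix e :: real assume "e > 0"
    then have "near d H e \<in> \<Inter>S" using near_mem_if_conv filt H by blast
    then show "\<exists>g\<in>\<Inter>S. g \<subseteq> near d H e" by blast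
  qed
  have "wfil d (\<Inter>S)"
    unfolding wfil_def weakly_flat_iff_conv_self
    using is_filt_Inter[OF S(1) filt] least upper by blast
  then show ?thesis unfolding is_lub_def using upper least by blast
qed

lemma mem_seq_filter_iff: "g \<in> seq_filter x \<longleftrightarrow> (\<forall>\<^sub>F p in sequentially. x p \<in> g)"
  unfolding seq_filter_def eventually_sequentially by auto

lemma is_filt_seq_filter: "is_filt (seq_filter x)"
proof -
  have "UNIV \<in> seq_filter x" by (simp add: mem_seq_filter_iff)
  moreover have "f \<noteq> {}" if "f \<in> seq_filter x" for f
    using that unfolding mem_seq_filter_iff eventually_sequentially by blast
  moreover have "f \<inter> g \<in> seq_filter x" if "f \<in> seq_filter x" "g \<in> seq_filter x" for f g
    using that unfolding mem_seq_filter_iff by (simp add: eventually_conj)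
  moreover have "g \<in> seq_filter x" if "f \<in> seq_filter x" "f \<subseteq> g" for f g
    using that unfolding mem_seq_filter_iff by (auto elim: eventually_mono)
  ultimately show ?thesis unfolding is_filt_def by blast
qed

lemma near_seq_filter_iff:
  "a \<in> near d (seq_filter y) e \<longleftrightarrow> (\<exists>\<^sub>F m in sequentially. d a (y m) \<le> ennreal e)"
proof
  assume near: "a \<in> near d (seq_filter y) e"
  show "\<exists>\<^sub>F m in sequentially. d a (y m) \<le> ennreal e"
    unfolding frequently_sequentially
  proof
    fix N
    have "{y m |m. m \<ge> N} \<in> seq_filter y" unfolding seq_filter_def by blast
    then obtain z where "z \<in> {y m |m. m \<ge> N}" "d a z \<le> ennreal e"
      using near unfolding near_def by blast
    then show "\<exists>m\<ge>N. d a (y m) \<le> ennreal e" by blast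
  qed
next
  assume freq: "\<exists>\<^sub>F m in sequentially. d a (y m) \<le> ennreal e"
  have "\<exists>z\<in>g. d a z \<le> ennreal e" if g: "g \<in> seq_filter y" for g
  proof -
    obtain M where M: "\<And>m. m \<ge> M \<Longrightarrow> y m \<in> g"
      using g unfolding mem_seq_filter_iff eventually_sequentially by blast
    obtain m where "m \<ge> M" "d a (y m) \<le> ennreal e"
      using freq unfolding frequently_sequentially by blast
    then show ?thesis using M by blast
  qed
  then show "a \<in> near d (seq_filter y) e" unfolding near_def by blast
qed

lemma near_seq_filter_if_eventually:
  "(\<forall>\<^sub>F m in sequentially. d a (y m) \<le> ennreal e) \<Longrightarrow> a \<in> near d (seq_filter y) e"
  unfolding near_seq_filter_iff by (rule eventually_frequently[OF trivial_limit_sequentially])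

lemma conv_seq_filter_iff:
  "conv d (seq_filter x) F \<longleftrightarrow> (\<forall>e>0. \<forall>\<^sub>F p in sequentially. x p \<in> near d F e)"
proof -
  have "(\<exists>g\<in>seq_filter x. g \<subseteq> near d F e) \<longleftrightarrow> (\<forall>\<^sub>F p in sequentially. x p \<in> near d F e)" for e
  proof
    assume "\<exists>g\<in>seq_filter x. g \<subseteq> near d F e"
    then obtain g where "\<forall>\<^sub>F p in sequentially. x p \<in> g" "g \<subseteq> near d F e"
      using mem_seq_filter_iff by blast
    then show "\<forall>\<^sub>F p in sequentially. x p \<in> near d F e" by (auto elim: eventually_mono)
  next
    assume "\<forall>\<^sub>F p in sequentially. x p \<in> near d F e"
    then show "\<exists>g\<in>seq_filter x. g \<subseteq> near d F e" using mem_seq_filter_iff by blast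
  qed
  then show ?thesis unfolding conv_iff_near by blast
qed

lemma wfil_seq_filter:
  assumes "fwd_cauchy d x"
  shows "wfil d (seq_filter x)"
  unfolding wfil_def weakly_flat_iff_conv_self conv_seq_filter_iff
proof (intro conjI is_filt_seq_filter allI impI)
  fix e :: real assume "e > 0"
  then obtain N where N: "\<And>n m. N \<le> n \<Longrightarrow> n \<le> m \<Longrightarrow> d (x n) (x m) \<le> ennreal e"
    using assms unfolding fwd_cauchy_def by blast
  have "x p \<in> near d (seq_filter x) e" if "N \<le> p" for p
    using that
    by (intro near_seq_filter_if_eventually) (auto simp: eventually_sequentially intro: N)
  then show "\<forall>\<^sub>F p in sequentially. x p \<in> near d (seq_filter x) e"
    unfolding eventually_sequentially by blast
qed

lemma eventually_geometric_le: "0 < \<delta> \<Longrightarrow> \<forall>\<^sub>F n in sequentially. c * (1/2::real)^n \<le> \<delta>"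
proof -
  assume "0 < \<delta>"
  have "(\<lambda>n. c * (1/2::real)^n) \<longlonglongrightarrow> 0" by (intro tendsto_mult_right_zero LIMSEQ_power_zero) simp
  from order_tendstoD(2)[OF this \<open>0 < \<delta>\<close>] show ?thesis by (rule eventually_mono) simp
qed

lemma gms_dist_le_geometric:
  assumes gms: "gms d" and c: "0 \<le> c" and step: "\<And>n. d (x n) (x (Suc n)) \<le> ennreal (c * (1/2)^n)"
    and "n \<le> m"
  shows "d (x n) (x m) \<le> ennreal (2*c*(1/2)^n)"
proof -
  have partial: "d (x n) (x (n + j)) \<le> ennreal (2*c*(1/2)^n - 2*c*(1/2)^(n+j))" for j
  proof (induction j)
    case 0
    have "d (x n) (x n) = 0" using gms unfolding gms_def by blast
    then show ?case by simp
  next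
    case (Suc j)
    have "0 \<le> 2*c*(1/2)^n - 2*c*(1/2)^(n+j)"
      using c by (simp add: mult_left_mono power_add power_le_one)
    then show ?case
      using gms_triangle[OF gms Suc step[of "n+j"]] c by (simp add: algebra_simps)
  qed
  obtain j where "m = n + j" using \<open>n \<le> m\<close> le_Suc_ex by blast
  then have "d (x n) (x m) \<le> ennreal (2*c*(1/2)^n - 2*c*(1/2)^(n+j))" using partial by blast
  also have "\<dots> \<le> ennreal (2*c*(1/2)^n)" using c by (intro ennreal_leI) simp
  finally show ?thesis .
qed

lemma fwd_cauchy_geometric:
  assumes gms: "gms d" and c: "0 \<le> c" and step: "\<And>n. d (x n) (x (Suc n)) \<le> ennreal (c * (1/2)^n)"
  shows "fwd_cauchy d x"
  unfolding fwd_cauchy_def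
proof (intro allI impI)
  fix e :: real assume "e > 0"
  then obtain N where N: "\<And>n. n \<ge> N \<Longrightarrow> 2*c*(1/2)^n \<le> e"
    using eventually_geometric_le[of e "2*c"] unfolding eventually_sequentially by blast
  have "d (x n) (x m) \<le> ennreal e" if "N \<le> n" "n \<le> m" for n m
    using gms_dist_le_geometric[OF gms c step \<open>n \<le> m\<close>] ennreal_leI[OF N[OF \<open>N \<le> n\<close>]]
    by (rule order_trans)
  then show "\<exists>N. \<forall>n m. N \<le> n \<and> n \<le> m \<longrightarrow> d (x n) (x m) \<le> ennreal e" by blast
qed

lemma conv_seq_filter_if_subseq_near:
  assumes gms: "gms d" and cauchy: "fwd_cauchy d x"
    and k: "\<And>n. n \<le> k n" and near: "\<And>n. x (k n) \<in> near d G (c*(1/2)^n)"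
  shows "conv d (seq_filter x) G"
  unfolding conv_seq_filter_iff
proof (intro allI impI)
  fix e :: real assume "e > 0"
  then have "e/2 > 0" by simp
  then obtain N where N: "\<forall>n m. N \<le> n \<and> n \<le> m \<longrightarrow> d (x n) (x m) \<le> ennreal (e/2)"
    using cauchy unfolding fwd_cauchy_def by blast
  obtain n0 where n0: "\<And>n. n \<ge> n0 \<Longrightarrow> c*(1/2)^n \<le> e/2"
    using eventually_geometric_le[OF \<open>e/2 > 0\<close>, of c] unfolding eventually_sequentially by blast
  have "x q \<in> near d G e" if "N \<le> q" for q
  proof -
    define n where "n = max q n0"
    have close: "d (x q) (x (k n)) \<le> ennreal (e/2)"
      using N \<open>N \<le> q\<close> k[of n] unfolding n_def by (meson le_trans max.cobounded1)
    have "x (k n) \<in> near d G (e/2)"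
      using near_mono[OF n0[of n], of d G] near[of n] unfolding n_def by auto
    from near_triangle[OF gms close this] \<open>e > 0\<close> show ?thesis by simp
  qed
  then show "\<forall>\<^sub>F q in sequentially. x q \<in> near d G e" unfolding eventually_sequentially by blast
qed

lemma fwd_cauchy_approximant:
  assumes gms: "gms d" and F: "wfil d F" and c: "c > 0" and x0: "x0 \<in> near d F c"
  shows "\<exists>z. fwd_cauchy d z \<and> conv d (seq_filter z) F \<and> (\<forall>n. d x0 (z n) \<le> ennreal (2*c))"
proof -
  let ?P = "\<lambda>n x. x \<in> near d F (c*(1/2)^n) \<and> (n = 0 \<longrightarrow> x = x0)"
  let ?Q = "\<lambda>n x y. d x y \<le> ennreal (c*(1/2)^n)"
  have "\<exists>y. ?P (Suc n) y \<and> ?Q n x y" if x: "?P n x" for n x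
  proof -
    have "near d F (c*(1/2)^Suc n) \<in> F" using near_mem_if_wfil[OF F] c by simp
    then obtain y where "y \<in> near d F (c*(1/2)^Suc n)" "d x y \<le> ennreal (c*(1/2)^n)"
      using x unfolding near_def by blast
    then show ?thesis by blast
  qed
  moreover have "\<exists>x. ?P 0 x" using x0 by auto
  ultimately obtain z where z: "\<And>n. ?P n (z n)" "\<And>n. ?Q n (z n) (z (Suc n))"
    using dependent_nat_choice[of ?P ?Q] by blast
  have cauchy: "fwd_cauchy d z" using fwd_cauchy_geometric[OF gms _ z(2)] c by simp
  have "conv d (seq_filter z) F"
    using conv_seq_filter_if_subseq_near[OF gms cauchy, of id F c] z(1) by simp
  moreover have "d x0 (z n) \<le> ennreal (2*c)" for n
  proof -
    have "d (z 0) (z n) \<le> ennreal (2*c*(1/2)^0)"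
      using c by (intro gms_dist_le_geometric[OF gms _ z(2)]) simp_all
    then show ?thesis using z(1)[of 0] by simp
  qed
  ultimately show ?thesis using cauchy by blast
qed

lemma is_lub_approximants:
  assumes gms: "gms d" and F: "wfil d F"
  shows "is_lub d {seq_filter x |x. fwd_cauchy d x \<and> conv d (seq_filter x) F} F"
proof -
  let ?S = "{seq_filter x |x. fwd_cauchy d x \<and> conv d (seq_filter x) F}"
  have "conv d F H" if H: "\<forall>G\<in>?S. conv d G H" for H
    unfolding conv_iff_near
  proof (intro allI impI)
    fix e :: real assume e: "e > 0"
    have "x0 \<in> near d H e" if x0: "x0 \<in> near d F (e/4)" for x0
    proof -
      obtain z where z: "fwd_cauchy d z" "conv d (seq_filter z) F" "\<And>n. d x0 (z n) \<le> ennreal (e/2)"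
        using fwd_cauchy_approximant[OF gms F _ x0] e by auto
      then have "conv d (seq_filter z) H" using H by blast
      then have "\<forall>\<^sub>F p in sequentially. z p \<in> near d H (e/2)"
        using e unfolding conv_seq_filter_iff by simp
      then obtain n where "z n \<in> near d H (e/2)" unfolding eventually_sequentially by auto
      from near_triangle[OF gms z(3)[of n] this] e show ?thesis by simp
    qed
    moreover have "near d F (e/4) \<in> F" using near_mem_if_wfil[OF F] e by simp
    ultimately show "\<exists>f\<in>F. f \<subseteq> near d H e" by blast
  qed
  then show ?thesis unfolding is_lub_def using F by blast
qed

lemma conv_seq_filter_reaches:
  assumes "conv d (seq_filter x) F" "g \<in> F" "e > 0"
  shows "\<exists>k\<ge>n. \<exists>w\<in>g. d (x k) w \<le> ennreal e"
proof -
  have "\<forall>\<^sub>F p in sequentially. x p \<in> near d F e"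
    using assms(1,3) unfolding conv_seq_filter_iff by simp
  then obtain N where "\<And>p. p \<ge> N \<Longrightarrow> x p \<in> near d F e" unfolding eventually_sequentially by blast
  then have "x (max n N) \<in> near d F e" by simp
  then obtain w where "w \<in> g" "d (x (max n N)) w \<le> ennreal e"
    using assms(2) unfolding near_def by blast
  then show ?thesis by (intro exI[of _ "max n N"]) auto
qed

lemma conv_seq_filter_tracks:
  assumes "conv d (seq_filter x) F" "\<And>n. W n \<in> F"
  obtains k a where "\<And>n. n \<le> k n" "\<And>n. a n \<in> W n" "\<And>n. d (x (k n)) (a n) \<le> ennreal ((1/2)^n)"
proof -
  have "\<forall>n. \<exists>k\<ge>n. \<exists>w\<in>W n. d (x k) w \<le> ennreal ((1/2)^n)"
    using conv_seq_filter_reaches[OF assms(1) assms(2)] by simp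
  then show ?thesis using that by metis
qed

lemma conv_seq_filter_if_tracks:
  assumes gms: "gms d" and cauchy: "fwd_cauchy d x" and k: "\<And>n. n \<le> k n"
    and close: "\<And>n. d (x (k n)) (a n) \<le> ennreal ((1/2)^n)"
    and near: "\<And>n. a n \<in> near d G (2*(1/2)^n)"
  shows "conv d (seq_filter x) G"
proof (rule conv_seq_filter_if_subseq_near[OF gms cauchy k])
  show "x (k n) \<in> near d G (3*(1/2)^n)" for n
    using near_triangle[OF gms close[of n] near[of n]] by simp
qed

lemma flat_imp_weakly_flat:
  assumes "flat d F"
  shows "weakly_flat d F"
  unfolding weakly_flat_def
proof (intro allI impI)
  fix e :: real assume "e > 0"
  with assms obtain f where "f \<in> F"
    and f: "\<forall>X. finite X \<and> X \<subseteq> f \<longrightarrow> (\<forall>g\<in>F. \<exists>y\<in>g. \<forall>x\<in>X. d x y \<le> ennreal e)"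
    unfolding flat_def by blast
  have "\<exists>y\<in>g. d x y \<le> ennreal e" if "x \<in> f" "g \<in> F" for x g
    using f[rule_format, of "{x}" g] that by simp
  then show "\<exists>f\<in>F. \<forall>x\<in>f. \<forall>g\<in>F. \<exists>y\<in>g. d x y \<le> ennreal e" using \<open>f \<in> F\<close> by blast
qed

definition flat_witnesses :: "('a \<Rightarrow> 'a \<Rightarrow> ennreal) \<Rightarrow> 'a set set \<Rightarrow> (nat \<Rightarrow> 'a set) \<Rightarrow> bool" where
  "flat_witnesses d F W \<longleftrightarrow> (\<forall>n. W n \<in> F \<and>
     (\<forall>X. finite X \<and> X \<subseteq> W n \<longrightarrow> (\<forall>g\<in>F. \<exists>y\<in>g. \<forall>x\<in>X. d x y \<le> ennreal ((1/2)^n))))"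

lemma flat_witnessesD:
  assumes "flat_witnesses d F W"
  shows "W n \<in> F"
    and "finite X \<Longrightarrow> X \<subseteq> W n \<Longrightarrow> g \<in> F \<Longrightarrow> \<exists>y\<in>g. \<forall>x\<in>X. d x y \<le> ennreal ((1/2)^n)"
  using assms unfolding flat_witnesses_def by blast+

lemma ex_flat_witnesses:
  assumes "flat d F"
  shows "\<exists>W. flat_witnesses d F W"
proof -
  have "\<forall>n. \<exists>f. f \<in> F \<and>
      (\<forall>X. finite X \<and> X \<subseteq> f \<longrightarrow> (\<forall>g\<in>F. \<exists>y\<in>g. \<forall>x\<in>X. d x y \<le> ennreal ((1/2)^n)))"
    using assms[unfolded flat_def, rule_format, of "(1/2)^_"] unfolding Bex_def by simp
  from choice[OF this] show ?thesis unfolding flat_witnesses_def .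
qed

lemma flat_witnesses_subset_near:
  assumes "flat_witnesses d F W"
  shows "W n \<subseteq> near d F ((1/2)^n)"
proof
  fix w assume "w \<in> W n"
  then have "\<exists>y\<in>g. \<forall>x\<in>{w}. d x y \<le> ennreal ((1/2)^n)" if "g \<in> F" for g
    using flat_witnessesD(2)[OF assms, of "{w}" n g] \<open>w \<in> W n\<close> that by simp
  then show "w \<in> near d F ((1/2)^n)" unfolding near_def by simp
qed

(* Flatness is used here: each new term is chosen close to the previous one and to the current
   terms of all sequences in A at once. *)
lemma flat_witnesses_merge:
  assumes gms: "gms d" and F: "is_filt F" and W: "flat_witnesses d F W"
    and A: "finite A" "\<And>a n. a \<in> A \<Longrightarrow> a n \<in> W n"
  shows "\<exists>z. fwd_cauchy d z \<and> conv d (seq_filter z) F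
           \<and> (\<forall>a\<in>A. \<forall>n. a n \<in> near d (seq_filter z) (2*(1/2)^n))"
proof -
  let ?P = "\<lambda>n z. z \<in> W n"
  let ?Q = "\<lambda>n z z'. \<forall>x\<in>insert z ((\<lambda>a. a n) ` A). d x z' \<le> ennreal ((1/2)^n)"
  have "\<exists>z'. ?P (Suc n) z' \<and> ?Q n z z'" if z: "?P n z" for n z
  proof -
    have "finite (insert z ((\<lambda>a. a n) ` A))" "insert z ((\<lambda>a. a n) ` A) \<subseteq> W n"
      using A z by auto
    from flat_witnessesD(2)[OF W this flat_witnessesD(1)[OF W, of "Suc n"]] show ?thesis by blast
  qed
  moreover have "\<exists>z. ?P 0 z"
    using is_filt_nonempty[OF F flat_witnessesD(1)[OF W, of 0]] by blast
  ultimately obtain z where z: "\<And>n. z n \<in> W n" "\<And>n. ?Q n (z n) (z (Suc n))"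
    using dependent_nat_choice[of ?P ?Q] by blast
  have step: "d (z n) (z (Suc n)) \<le> ennreal (1*(1/2)^n)" for n using z(2)[of n] by simp
  have cauchy: "fwd_cauchy d z" using fwd_cauchy_geometric[OF gms _ step] by simp
  have "z n \<in> near d F ((1/2)^n)" for n using flat_witnesses_subset_near[OF W] z(1) by auto
  then have "conv d (seq_filter z) F"
    using conv_seq_filter_if_subseq_near[OF gms cauchy, of id F 1] by simp
  moreover have "a n \<in> near d (seq_filter z) (2*(1/2)^n)" if "a \<in> A" for a n
  proof (rule near_seq_filter_if_eventually)
    have "d (a n) (z m) \<le> ennreal (2*(1/2)^n)" if "Suc n \<le> m" for m
    proof -
      have first: "d (a n) (z (Suc n)) \<le> ennreal ((1/2)^n)" using z(2)[of n] \<open>a \<in> A\<close> by simp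
      have "d (z (Suc n)) (z m) \<le> ennreal (2*1*(1/2)^Suc n)"
        using gms_dist_le_geometric[OF gms _ step that] by simp
      then have "d (z (Suc n)) (z m) \<le> ennreal ((1/2)^n)" by simp
      from gms_triangle[OF gms first this] show ?thesis by simp
    qed
    then show "\<forall>\<^sub>F m in sequentially. d (a n) (z m) \<le> ennreal (2*(1/2)^n)"
      unfolding eventually_sequentially by blast
  qed
  ultimately show ?thesis using cauchy by blast
qed

lemma approximants_directed_if_flat:
  assumes gms: "gms d" and F: "is_filt F" and flat: "flat d F"
  shows "directed_fam d {seq_filter x |x. fwd_cauchy d x \<and> conv d (seq_filter x) F}"
    (is "directed_fam d ?S")
  unfolding directed_fam_def
proof (intro ballI)
  fix s t assume "s \<in> ?S" "t \<in> ?S"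
  then obtain x y where x: "s = seq_filter x" "fwd_cauchy d x" "conv d (seq_filter x) F"
    and y: "t = seq_filter y" "fwd_cauchy d y" "conv d (seq_filter y) F" by blast
  obtain W where W: "flat_witnesses d F W" using ex_flat_witnesses[OF flat] by blast
  have W_mem: "\<And>n. W n \<in> F" using flat_witnessesD(1)[OF W] .
  obtain kx a where kx: "\<And>n. n \<le> kx n" "\<And>n. a n \<in> W n" "\<And>n. d (x (kx n)) (a n) \<le> ennreal ((1/2)^n)"
    using conv_seq_filter_tracks[where W = W, OF x(3) W_mem] by blast
  obtain ky b where ky: "\<And>n. n \<le> ky n" "\<And>n. b n \<in> W n" "\<And>n. d (y (ky n)) (b n) \<le> ennreal ((1/2)^n)"
    using conv_seq_filter_tracks[where W = W, OF y(3) W_mem] by blast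
  obtain z where z: "fwd_cauchy d z" "conv d (seq_filter z) F"
    "\<And>n. a n \<in> near d (seq_filter z) (2*(1/2)^n)" "\<And>n. b n \<in> near d (seq_filter z) (2*(1/2)^n)"
    using flat_witnesses_merge[OF gms F W, of "{a, b}"] kx(2) ky(2) by auto
  have "conv d s (seq_filter z)" "conv d t (seq_filter z)"
    using conv_seq_filter_if_tracks[OF gms x(2) kx(1,3) z(3)]
      conv_seq_filter_if_tracks[OF gms y(2) ky(1,3) z(4)] x(1) y(1)
    by simp_all
  moreover have "seq_filter z \<in> ?S" using z(1,2) by blast
  ultimately show "\<exists>u\<in>?S. conv d s u \<and> conv d t u" by blast
qed

lemma flat_is_lub_of_directed_approximants:
  assumes gms: "gms d" and F: "is_filt F" and flat: "flat d F"
  shows "\<exists>S. S \<noteq> {} \<and> S \<subseteq> {seq_filter x |x. fwd_cauchy d x} \<and> directed_fam d S \<and> is_lub d S F"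
proof -
  let ?S = "{seq_filter x |x. fwd_cauchy d x \<and> conv d (seq_filter x) F}"
  have wfil: "wfil d F" using F flat_imp_weakly_flat[OF flat] unfolding wfil_def by blast
  then have "near d F 1 \<in> F" using near_mem_if_wfil[of d F 1] by simp
  then obtain x0 where "x0 \<in> near d F 1" using is_filt_nonempty[OF F] by blast
  then obtain z where "fwd_cauchy d z" "conv d (seq_filter z) F"
    using fwd_cauchy_approximant[OF gms wfil zero_less_one] by blast
  then have "?S \<noteq> {}" by blast
  moreover have "?S \<subseteq> {seq_filter x |x. fwd_cauchy d x}" by blast
  ultimately show ?thesis
    using approximants_directed_if_flat[OF gms F flat] is_lub_approximants[OF gms wfil]
    by (intro exI[of _ ?S] conjI)
qed

lemma directed_fam_finite_upper_bound:
  assumes gms: "gms d" and dir: "directed_fam d S" and "S \<noteq> {}" and "finite T" "T \<subseteq> S"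
  shows "\<exists>u\<in>S. \<forall>t\<in>T. conv d t u"
  using assms(4,5)
proof (induction T rule: finite_induct)
  case empty
  then show ?case using \<open>S \<noteq> {}\<close> by blast
next
  case (insert t T)
  then obtain u where u: "u \<in> S" "\<forall>t'\<in>T. conv d t' u" by blast
  moreover have "t \<in> S" using insert.prems by blast
  ultimately obtain w where w: "w \<in> S" "conv d t w" "conv d u w"
    using dir unfolding directed_fam_def by blast
  then have "\<forall>t'\<in>insert t T. conv d t' w" using u(2) conv_trans[OF gms _ w(3)] by blast
  then show ?case using w(1) by blast
qed

lemma eventually_near_of_tail:
  assumes gms: "gms d" and conv: "conv d (seq_filter x) (seq_filter v)" and cauchy: "fwd_cauchy d v"
    and tail: "\<forall>m\<ge>p. d (x p) (x m) \<le> ennreal c" and c: "c > 0"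
  shows "\<forall>\<^sub>F m in sequentially. d (x p) (v m) \<le> ennreal (3*c)"
proof -
  have "\<forall>\<^sub>F q in sequentially. x q \<in> near d (seq_filter v) c"
    using conv c unfolding conv_seq_filter_iff by simp
  then obtain q where "p \<le> q" "x q \<in> near d (seq_filter v) c"
    unfolding eventually_sequentially by (meson max.cobounded1 max.cobounded2)
  then have "\<exists>\<^sub>F m in sequentially. d (x q) (v m) \<le> ennreal c"
    unfolding near_seq_filter_iff by blast
  moreover obtain M where M: "\<forall>n m. M \<le> n \<and> n \<le> m \<longrightarrow> d (v n) (v m) \<le> ennreal c"
    using cauchy c unfolding fwd_cauchy_def by blast
  ultimately obtain m0 where m0: "M \<le> m0" "d (x q) (v m0) \<le> ennreal c"
    unfolding frequently_sequentially by blast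
  have far: "d (x p) (v m0) \<le> ennreal (2*c)"
    using gms_triangle[OF gms tail[rule_format, OF \<open>p \<le> q\<close>] m0(2)] c by simp
  have "d (x p) (v m) \<le> ennreal (3*c)" if "m0 \<le> m" for m
  proof -
    have "d (v m0) (v m) \<le> ennreal c" using M m0(1) that by blast
    from gms_triangle[OF gms far this] c show ?thesis by simp
  qed
  then show ?thesis unfolding eventually_sequentially by blast
qed

definition settled_points :: "('a \<Rightarrow> 'a \<Rightarrow> ennreal) \<Rightarrow> 'a set set set \<Rightarrow> real \<Rightarrow> 'a set" where
  "settled_points d S c =
     {x p | x p. seq_filter x \<in> S \<and> fwd_cauchy d x \<and> (\<forall>m\<ge>p. d (x p) (x m) \<le> ennreal c)}"

lemma settled_points_mem_Inter:
  assumes cauchy: "S \<subseteq> {seq_filter x |x. fwd_cauchy d x}" and c: "c > 0"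
  shows "settled_points d S c \<in> \<Inter>S"
proof
  fix G assume "G \<in> S"
  obtain x where x: "G = seq_filter x" "fwd_cauchy d x" using cauchy \<open>G \<in> S\<close> by blast
  then obtain N where N: "\<forall>n m. N \<le> n \<and> n \<le> m \<longrightarrow> d (x n) (x m) \<le> ennreal c"
    using c unfolding fwd_cauchy_def by blast
  have "x p \<in> settled_points d S c" if "N \<le> p" for p
  proof -
    have "\<forall>m\<ge>p. d (x p) (x m) \<le> ennreal c" using N that by blast
    then show ?thesis unfolding settled_points_def using \<open>G \<in> S\<close> x by blast
  qed
  then show "settled_points d S c \<in> G"
    unfolding x(1) mem_seq_filter_iff eventually_sequentially by blast
qed

lemma settled_points_common_near:
  assumes gms: "gms d" and ne: "S \<noteq> {}" and cauchy: "S \<subseteq> {seq_filter x |x. fwd_cauchy d x}"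
    and dir: "directed_fam d S" and c: "c > 0"
    and X: "finite X" "X \<subseteq> settled_points d S c" and g: "g \<in> \<Inter>S"
  shows "\<exists>y\<in>g. \<forall>w\<in>X. d w y \<le> ennreal (3*c)"
proof -
  have "\<forall>w\<in>X. \<exists>x p. w = x p \<and> seq_filter x \<in> S \<and> fwd_cauchy d x \<and> (\<forall>m\<ge>p. d (x p) (x m) \<le> ennreal c)"
    using X(2) unfolding settled_points_def by blast
  then obtain sx px where sx: "\<And>w. w \<in> X \<Longrightarrow> w = sx w (px w) \<and> seq_filter (sx w) \<in> S
      \<and> (\<forall>m\<ge>px w. d (sx w (px w)) (sx w m) \<le> ennreal c)"
    by metis
  have "finite ((\<lambda>w. seq_filter (sx w)) ` X)" "(\<lambda>w. seq_filter (sx w)) ` X \<subseteq> S"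
    using X(1) sx by auto
  from directed_fam_finite_upper_bound[OF gms dir ne this]
  obtain u where u: "u \<in> S" "\<And>w. w \<in> X \<Longrightarrow> conv d (seq_filter (sx w)) u" by auto
  obtain v where v: "u = seq_filter v" "fwd_cauchy d v" using u(1) cauchy by blast
  have "\<forall>w\<in>X. \<forall>\<^sub>F m in sequentially. d w (v m) \<le> ennreal (3*c)"
  proof
    fix w assume "w \<in> X"
    have "conv d (seq_filter (sx w)) (seq_filter v)" using u(2)[OF \<open>w \<in> X\<close>] v(1) by simp
    from eventually_near_of_tail[OF gms this v(2) _ c] sx[OF \<open>w \<in> X\<close>]
    show "\<forall>\<^sub>F m in sequentially. d w (v m) \<le> ennreal (3*c)" by metis
  qed
  from eventually_ball_finite[OF X(1) this]
  have "\<forall>\<^sub>F m in sequentially. \<forall>w\<in>X. d w (v m) \<le> ennreal (3*c)" .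
  moreover have "g \<in> seq_filter v" using g u(1) v(1) by blast
  then have "\<forall>\<^sub>F m in sequentially. v m \<in> g" unfolding mem_seq_filter_iff .
  ultimately have "\<forall>\<^sub>F m in sequentially. v m \<in> g \<and> (\<forall>w\<in>X. d w (v m) \<le> ennreal (3*c))"
    by (rule eventually_conj[rotated])
  then show ?thesis unfolding eventually_sequentially by blast
qed

lemma flat_Inter_directed_cauchy:
  assumes gms: "gms d" and ne: "S \<noteq> {}" and cauchy: "S \<subseteq> {seq_filter x |x. fwd_cauchy d x}"
    and dir: "directed_fam d S"
  shows "flat d (\<Inter>S)"
  unfolding flat_def
proof (intro allI impI)
  fix \<epsilon> :: real assume "\<epsilon> > 0"
  then have c: "\<epsilon>/3 > 0" by simp
  have "\<exists>y\<in>g. \<forall>w\<in>X. d w y \<le> ennreal \<epsilon>"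
    if "finite X" "X \<subseteq> settled_points d S (\<epsilon>/3)" "g \<in> \<Inter>S" for X g
    using settled_points_common_near[OF gms ne cauchy dir c that] by simp
  then show "\<exists>f\<in>\<Inter>S. \<forall>X. finite X \<and> X \<subseteq> f \<longrightarrow> (\<forall>g\<in>\<Inter>S. \<exists>y\<in>g. \<forall>x\<in>X. d x y \<le> ennreal \<epsilon>)"
    using settled_points_mem_Inter[OF cauchy c] by blast
qed

lemma directed_cauchy_lub_equiv_flat:
  assumes gms: "gms d" and "S \<noteq> {}" and "S \<subseteq> {seq_filter x |x. fwd_cauchy d x}"
    and "directed_fam d S" and "is_lub d S G"
  shows "\<exists>F. is_filt F \<and> flat d F \<and> conv d F G \<and> conv d G F"
proof -
  have "\<forall>G\<in>S. wfil d G" using assms(3) wfil_seq_filter by blast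
  then have lub: "is_lub d S (\<Inter>S)" using is_lub_Inter assms(2) by blast
  then have "is_filt (\<Inter>S)" unfolding is_lub_def wfil_def by blast
  with flat_Inter_directed_cauchy[OF assms(1-4)] is_lub_unique[OF lub assms(5)]
  show ?thesis by blast
qed

theorem mainTheorem12:
  fixes d :: "'a \<Rightarrow> 'a \<Rightarrow> ennreal"
  assumes "gms d"
  shows
    "(\<forall>S. S \<noteq> {} \<and> (\<forall>G\<in>S. wfil d G) \<longrightarrow> (\<exists>F. is_lub d S F))
   \<and> (\<forall>F. wfil d F \<longrightarrow>
        is_lub d {seq_filter x |x. fwd_cauchy d x \<and> conv d (seq_filter x) F} F)
   \<and> (\<forall>F. is_filt F \<and> flat d F \<longrightarrow>
        (\<exists>S. S \<noteq> {} \<and> S \<subseteq> {seq_filter x |x. fwd_cauchy d x} \<and> directed_fam d S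
             \<and> is_lub d S F))
   \<and> (\<forall>S G. S \<noteq> {} \<and> S \<subseteq> {seq_filter x |x. fwd_cauchy d x} \<and> directed_fam d S
             \<and> is_lub d S G \<longrightarrow>
        (\<exists>F. is_filt F \<and> flat d F \<and> conv d F G \<and> conv d G F))"
proof (intro conjI allI impI; (elim conjE)?)
  show "\<exists>F. is_lub d S F" if "S \<noteq> {}" "\<forall>G\<in>S. wfil d G" for S :: "'a set set set"
    using is_lub_Inter[OF that] by blast
  show "is_lub d {seq_filter x |x. fwd_cauchy d x \<and> conv d (seq_filter x) F} F" if "wfil d F" for F
    using is_lub_approximants[OF assms that] .
  show "\<exists>S. S \<noteq> {} \<and> S \<subseteq> {seq_filter x |x. fwd_cauchy d x} \<and> directed_fam d S \<and> is_lub d S F"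
    if "is_filt F" "flat d F" for F
    using flat_is_lub_of_directed_approximants[OF assms that] .
  show "\<exists>F. is_filt F \<and> flat d F \<and> conv d F G \<and> conv d G F"
    if "S \<noteq> {}" "S \<subseteq> {seq_filter x |x. fwd_cauchy d x}" "directed_fam d S" "is_lub d S G" for S G
    using directed_cauchy_lub_equiv_flat[OF assms that] .
qed

end
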